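(* Let $p \ge 1$ and let $\mathcal{D}=\{(x_i,y_i) \mid i=1,\dots,m,\ x_i\in\mathbb{R}^d,\ y_i\in\{-1,1\}\}$ be a finite labeled dataset with $x_i \neq x_j$ whenever $y_i \neq y_j$. Let $c>0$ be a scalar such that for all $i,j$, $y_i \neq y_j$ implies $\|x_i - x_j\|_p > c$. Then there exists a function $f:\mathbb{R}^d \to \mathbb{R}$ which is $\frac{2}{c}$-Lipschitz continuous (with respect to $\|\cdot\|_p$ on $\mathbb{R}^d$ and the absolute value on $\mathbb{R}$) such that for every $i$ and every $\delta\in\mathbb{R}^d$ with $\|\delta\|_p < \frac{c}{2}$, we have $\mathrm{sign}(f(x_i+\delta)) = y_i$.
   Context: A function $f$ is $k$-Lipschitz continuous if $|f(x_1)-f(x_2)| \le k\,\|x_1-x_2\|_p$ for all $x_1,x_2$ in its domain. $\|\cdot\|_p$ denotes the usual $L_p$ (Minkowski) norm on $\mathbb{R}^d$. *)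

theory Defs
  imports "HOL-Analysis.Analysis"
begin

definition pnorm :: "real \<Rightarrow> real ^ 'd \<Rightarrow> real" where
  "pnorm p x = (\<Sum>i\<in>UNIV. \<bar>x $ i\<bar> powr p) powr (1 / p)"

definition lipschitz_p :: "real \<Rightarrow> real \<Rightarrow> (real ^ 'd \<Rightarrow> real) \<Rightarrow> bool" where
  "lipschitz_p p k f \<longleftrightarrow> (\<forall>x1 x2. \<bar>f x1 - f x2\<bar> \<le> k * pnorm p (x1 - x2))"

end

theory Submission
  imports Defs
begin

text \<open>Let d_S(z) = min(c, min_{s in S} |z - s|_p) be the p-distance to a finite set S, capped
  at c. By Minkowski's inequality it is 1-Lipschitz, so f = (d_N - d_P) / c, with P and N the
  points labelled 1 and -1, is 2/c-Lipschitz. Within p-distance c/2 of a point of P we have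
  d_P < c/2, while the separation c forces d_N > c/2; hence f is positive there, and
  symmetrically negative near N.\<close>

lemma convex_on_powr_nonneg:
  assumes "p \<ge> 1"
  shows "convex_on {0..} (\<lambda>x::real. x powr p)"
proof (rule convex_on_linorderI)
  fix t x y :: real
  assume t: "0 < t" "t < 1" and xy: "x \<in> {0..}" "y \<in> {0..}" "x < y"
  show "((1 - t) *\<^sub>R x + t *\<^sub>R y) powr p \<le> (1 - t) * x powr p + t * y powr p"
  proof (cases "x = 0")
    case True
    have "t powr p \<le> t powr 1"
      using t assms by (intro powr_mono') auto
    then have "t powr p * y powr p \<le> t * y powr p"
      using t by (intro mult_right_mono) auto
    then show ?thesis
      using True t xy by (simp add: powr_mult)
  next
    case False
    then have "x \<in> {0<..}" "y \<in> {0<..}"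
      using xy by auto
    with convex_onD[OF powr_convex[OF assms]] t show ?thesis
      by simp
  qed
qed simp

lemma sum_powr_root_eq_0_imp:
  fixes a :: "'i \<Rightarrow> real"
  assumes "finite I" "\<And>i. i \<in> I \<Longrightarrow> a i \<ge> 0" "(\<Sum>i\<in>I. a i powr p) powr (1/p) = 0"
  shows "\<forall>i\<in>I. a i = 0"
proof -
  have "(\<Sum>i\<in>I. a i powr p) = 0"
    using assms(3) by simp
  with assms(1,2) show ?thesis
    by (subst (asm) sum_nonneg_eq_0_iff) auto
qed

lemma minkowski_inequality_nonneg:
  fixes a b :: "'i \<Rightarrow> real"
  assumes "finite I" "p \<ge> 1" "\<And>i. i \<in> I \<Longrightarrow> a i \<ge> 0" "\<And>i. i \<in> I \<Longrightarrow> b i \<ge> 0"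
  shows "(\<Sum>i\<in>I. (a i + b i) powr p) powr (1/p) \<le>
         (\<Sum>i\<in>I. a i powr p) powr (1/p) + (\<Sum>i\<in>I. b i powr p) powr (1/p)"
proof -
  define A where "A = (\<Sum>i\<in>I. a i powr p) powr (1/p)"
  define B where "B = (\<Sum>i\<in>I. b i powr p) powr (1/p)"
  have A_pow: "(\<Sum>i\<in>I. a i powr p) = A powr p" and B_pow: "(\<Sum>i\<in>I. b i powr p) = B powr p"
    unfolding A_def B_def using assms(2) by (simp_all add: powr_powr sum_nonneg)
  consider "A = 0" | "B = 0" | "A > 0" "B > 0"
    unfolding A_def B_def by fastforce
  then show ?thesis
  proof cases
    case 1
    with sum_powr_root_eq_0_imp[of I a p] assms(1,3) have "\<forall>i\<in>I. a i = 0"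
      unfolding A_def by blast
    with 1 show ?thesis
      unfolding A_def B_def by simp
  next
    case 2
    with sum_powr_root_eq_0_imp[of I b p] assms(1,4) have "\<forall>i\<in>I. b i = 0"
      unfolding B_def by blast
    with 2 show ?thesis
      unfolding A_def B_def by simp
  next
    case 3
    define t where "t = B / (A + B)"
    have one_minus_t: "1 - t = A / (A + B)"
      unfolding t_def using 3 by (simp add: field_simps)
    \<comment> \<open>\<open>a / A\<close> and \<open>b / B\<close> have unit p-norm, and convexity of \<open>x powr p\<close> bounds their mean.\<close>
    have convex_combination: "(1 - t) * (a i / A) + t * (b i / B) = (a i + b i) / (A + B)" for i
    proof -
      have "(1 - t) * (a i / A) = a i / (A + B)"
        using 3 by (simp add: one_minus_t)
      moreover have "t * (b i / B) = b i / (A + B)"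
        using 3 by (simp add: t_def)
      ultimately show ?thesis
        by (simp add: add_divide_distrib)
    qed
    have "(\<Sum>i\<in>I. (a i + b i) powr p) / (A + B) powr p = (\<Sum>i\<in>I. ((a i + b i) / (A + B)) powr p)"
      by (simp add: powr_divide sum_divide_distrib)
    also have "\<dots> = (\<Sum>i\<in>I. ((1 - t) * (a i / A) + t * (b i / B)) powr p)"
      by (simp only: convex_combination)
    also have "\<dots> \<le> (\<Sum>i\<in>I. (1 - t) * (a i / A) powr p + t * (b i / B) powr p)"
      using 3 assms(3,4) one_minus_t
      by (intro sum_mono convex_onD[OF convex_on_powr_nonneg[OF assms(2)], simplified])
        (auto simp: t_def)
    also have "\<dots> = (1 - t) * (\<Sum>i\<in>I. a i powr p) / A powr p + t * (\<Sum>i\<in>I. b i powr p) / B powr p"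
      using 3 assms(3,4)
      by (simp add: sum.distrib sum_distrib_left sum_divide_distrib powr_divide)
    also have "\<dots> = 1"
      using 3 by (simp add: A_pow B_pow)
    finally have "(\<Sum>i\<in>I. (a i + b i) powr p) \<le> (A + B) powr p"
      using 3 by (simp add: divide_le_eq)
    then have "(\<Sum>i\<in>I. (a i + b i) powr p) powr (1/p) \<le> ((A + B) powr p) powr (1/p)"
      using assms(2) by (intro powr_mono2) (auto intro: sum_nonneg)
    also have "\<dots> = A + B"
      using 3 assms(2) by (simp add: powr_powr)
    finally show ?thesis
      unfolding A_def B_def .
  qed
qed

lemma minkowski_inequality:
  fixes a b :: "'i \<Rightarrow> real"
  assumes "finite I" "p \<ge> 1"
  shows "(\<Sum>i\<in>I. \<bar>a i + b i\<bar> powr p) powr (1/p) \<le>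
         (\<Sum>i\<in>I. \<bar>a i\<bar> powr p) powr (1/p) + (\<Sum>i\<in>I. \<bar>b i\<bar> powr p) powr (1/p)"
proof -
  have "(\<Sum>i\<in>I. \<bar>a i + b i\<bar> powr p) powr (1/p) \<le> (\<Sum>i\<in>I. (\<bar>a i\<bar> + \<bar>b i\<bar>) powr p) powr (1/p)"
    using assms(2) by (intro powr_mono2 sum_mono sum_nonneg) (auto intro: powr_mono2)
  also have "\<dots> \<le> (\<Sum>i\<in>I. \<bar>a i\<bar> powr p) powr (1/p) + (\<Sum>i\<in>I. \<bar>b i\<bar> powr p) powr (1/p)"
    using assms by (intro minkowski_inequality_nonneg) auto
  finally show ?thesis .
qed

lemma pnorm_nonneg: "pnorm p x \<ge> 0"
  unfolding pnorm_def by simp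

lemma pnorm_minus_commute: "pnorm p (a - b) = pnorm p (b - a)"
  unfolding pnorm_def by (simp add: abs_minus_commute)

lemma pnorm_triangle:
  assumes "p \<ge> 1"
  shows "pnorm p (a + b) \<le> pnorm p a + pnorm p b"
  unfolding pnorm_def using minkowski_inequality[of UNIV p "\<lambda>i. a $ i" "\<lambda>i. b $ i"] assms by simp

lemma pnorm_diff_triangle:
  assumes "p \<ge> 1"
  shows "pnorm p (a - c) \<le> pnorm p (a - b) + pnorm p (b - c)"
  using pnorm_triangle[OF assms, of "a - b" "b - c"] by simp

text \<open>The cap c keeps the minimum well defined when S is empty.\<close>
definition capped_pdist :: "real \<Rightarrow> real \<Rightarrow> (real ^ 'd) set \<Rightarrow> real ^ 'd \<Rightarrow> real" where
  "capped_pdist p c S z = Min (insert c ((\<lambda>s. pnorm p (z - s)) ` S))"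

lemma capped_pdist_le_cap:
  assumes "finite S"
  shows "capped_pdist p c S z \<le> c"
  unfolding capped_pdist_def using assms by (intro Min_le) auto

lemma capped_pdist_le:
  assumes "finite S" "s \<in> S"
  shows "capped_pdist p c S z \<le> pnorm p (z - s)"
  unfolding capped_pdist_def using assms by (intro Min_le) auto

lemma capped_pdist_gt:
  assumes "finite S" "r < c" "\<And>s. s \<in> S \<Longrightarrow> r < pnorm p (z - s)"
  shows "r < capped_pdist p c S z"
  unfolding capped_pdist_def using assms by (subst Min_gr_iff) auto

lemma capped_pdist_le_add:
  assumes "finite S" "p \<ge> 1"
  shows "capped_pdist p c S z1 \<le> capped_pdist p c S z2 + pnorm p (z1 - z2)"
proof -
  have "capped_pdist p c S z2 \<in> insert c ((\<lambda>s. pnorm p (z2 - s)) ` S)"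
    unfolding capped_pdist_def using assms(1) by (intro Min_in) auto
  then show ?thesis
  proof
    assume "capped_pdist p c S z2 = c"
    then show ?thesis
      using capped_pdist_le_cap[OF assms(1), of p c z1] pnorm_nonneg[of p "z1 - z2"] by simp
  next
    assume "capped_pdist p c S z2 \<in> (\<lambda>s. pnorm p (z2 - s)) ` S"
    then obtain s where s: "s \<in> S" "capped_pdist p c S z2 = pnorm p (z2 - s)"
      by auto
    have "capped_pdist p c S z1 \<le> pnorm p (z1 - s)"
      using capped_pdist_le[OF assms(1) s(1)] .
    also have "\<dots> \<le> pnorm p (z1 - z2) + pnorm p (z2 - s)"
      by (rule pnorm_diff_triangle[OF assms(2)])
    finally show ?thesis
      using s(2) by simp
  qed
qed

lemma capped_pdist_lipschitz:
  assumes "finite S" "p \<ge> 1"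
  shows "\<bar>capped_pdist p c S z1 - capped_pdist p c S z2\<bar> \<le> pnorm p (z1 - z2)"
  using capped_pdist_le_add[OF assms, of c z1 z2] capped_pdist_le_add[OF assms, of c z2 z1]
    pnorm_minus_commute[of p z1 z2] by auto

lemma lipschitz_p_capped_pdist_diff:
  assumes "finite P" "finite N" "p \<ge> 1" "c > 0"
  shows "lipschitz_p p (2 / c) (\<lambda>z. (capped_pdist p c N z - capped_pdist p c P z) / c)"
  unfolding lipschitz_p_def
proof (intro allI)
  fix z1 z2
  have "\<bar>(capped_pdist p c N z1 - capped_pdist p c P z1) / c
          - (capped_pdist p c N z2 - capped_pdist p c P z2) / c\<bar>
        = \<bar>(capped_pdist p c N z1 - capped_pdist p c N z2)
          - (capped_pdist p c P z1 - capped_pdist p c P z2)\<bar> / c"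
    using assms(4) by (simp add: diff_divide_distrib [symmetric] algebra_simps)
  also have "\<dots> \<le> 2 * pnorm p (z1 - z2) / c"
    using capped_pdist_lipschitz[OF assms(1,3), of c z1 z2]
      capped_pdist_lipschitz[OF assms(2,3), of c z1 z2] assms(4)
    by (intro divide_right_mono) auto
  finally show "\<bar>(capped_pdist p c N z1 - capped_pdist p c P z1) / c
                 - (capped_pdist p c N z2 - capped_pdist p c P z2) / c\<bar>
                \<le> 2 / c * pnorm p (z1 - z2)"
    by simp
qed

lemma capped_pdist_diff_pos:
  assumes "finite P" "finite N" "p \<ge> 1" "c > 0"
    and "s \<in> P" "\<And>n. n \<in> N \<Longrightarrow> pnorm p (s - n) > c" "pnorm p \<delta> < c / 2"
  shows "capped_pdist p c N (s + \<delta>) > capped_pdist p c P (s + \<delta>)"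
proof -
  have "capped_pdist p c P (s + \<delta>) < c / 2"
    using capped_pdist_le[OF assms(1,5), of p c "s + \<delta>"] assms(7) by simp
  moreover have "c / 2 < capped_pdist p c N (s + \<delta>)"
  proof (rule capped_pdist_gt[OF assms(2)])
    show "c / 2 < c"
      using assms(4) by simp
    fix n
    assume "n \<in> N"
    have "c < pnorm p (s - n)"
      using assms(6)[OF \<open>n \<in> N\<close>] .
    also have "\<dots> \<le> pnorm p (s - (s + \<delta>)) + pnorm p (s + \<delta> - n)"
      by (rule pnorm_diff_triangle[OF assms(3)])
    also have "pnorm p (s - (s + \<delta>)) = pnorm p \<delta>"
      using pnorm_minus_commute[of p s "s + \<delta>"] by simp
    finally show "c / 2 < pnorm p (s + \<delta> - n)"
      using assms(7) by simp
  qed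
  ultimately show ?thesis
    by simp
qed

lemma sgn_capped_pdist_diff:
  assumes "finite P" "finite N" "p \<ge> 1" "c > 0"
    and "\<And>u v. u \<in> P \<Longrightarrow> v \<in> N \<Longrightarrow> pnorm p (u - v) > c" and "pnorm p \<delta> < c / 2"
  shows "s \<in> P \<Longrightarrow> sgn ((capped_pdist p c N (s + \<delta>) - capped_pdist p c P (s + \<delta>)) / c) = 1"
    and "s \<in> N \<Longrightarrow> sgn ((capped_pdist p c N (s + \<delta>) - capped_pdist p c P (s + \<delta>)) / c) = -1"
proof -
  assume "s \<in> P"
  with capped_pdist_diff_pos[OF assms(1-4) _ _ assms(6)] assms(4,5)
  show "sgn ((capped_pdist p c N (s + \<delta>) - capped_pdist p c P (s + \<delta>)) / c) = 1"
    by simp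
next
  assume "s \<in> N"
  have "pnorm p (s - u) > c" if "u \<in> P" for u
    using assms(5)[OF that \<open>s \<in> N\<close>] pnorm_minus_commute[of p u s] by simp
  with \<open>s \<in> N\<close> show "sgn ((capped_pdist p c N (s + \<delta>) - capped_pdist p c P (s + \<delta>)) / c) = -1"
    using capped_pdist_diff_pos[OF assms(2,1,3,4) _ _ assms(6)] assms(4)
    by (simp add: divide_neg_pos)
qed

theorem proposition1:
  fixes p c :: real and m :: nat
    and x :: "nat \<Rightarrow> real ^ 'd" and y :: "nat \<Rightarrow> real"
  assumes "p \<ge> 1"
    and "\<forall>i\<in>{1..m}. y i \<in> {-1, 1}"
    and "\<forall>i\<in>{1..m}. \<forall>j\<in>{1..m}. y i \<noteq> y j \<longrightarrow> x i \<noteq> x j"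
    and "c > 0"
    and "\<forall>i\<in>{1..m}. \<forall>j\<in>{1..m}. y i \<noteq> y j \<longrightarrow> pnorm p (x i - x j) > c"
  shows "\<exists>f :: real ^ 'd \<Rightarrow> real. lipschitz_p p (2 / c) f \<and>
           (\<forall>i\<in>{1..m}. \<forall>\<delta> :: real ^ 'd. pnorm p \<delta> < c / 2 \<longrightarrow> sgn (f (x i + \<delta>)) = y i)"
proof -
  define P where "P = x ` {i\<in>{1..m}. y i = 1}"
  define N where "N = x ` {i\<in>{1..m}. y i = -1}"
  define f where "f z = (capped_pdist p c N z - capped_pdist p c P z) / c" for z
  have fin: "finite P" "finite N"
    unfolding P_def N_def by auto
  have sep: "pnorm p (u - v) > c" if "u \<in> P" "v \<in> N" for u v
    using that assms(5) unfolding P_def N_def by force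
  have "sgn (f (x i + \<delta>)) = y i" if "i \<in> {1..m}" "pnorm p \<delta> < c / 2" for i \<delta>
    using sgn_capped_pdist_diff[OF fin assms(1,4) sep that(2)] assms(2) that(1)
    unfolding f_def P_def N_def by fastforce
  moreover have "lipschitz_p p (2 / c) f"
    unfolding f_def using lipschitz_p_capped_pdist_diff[OF fin assms(1,4)] .
  ultimately show ?thesis
    by blast
qed

end
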